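(* Let $G$ be a non-amenable group, $H$ a subgroup of $G$, and $T$ a right transversal of $H$ in $G$ with $1\in T$; let $\pi_H\colon G\to H$ and $\pi_T\colon G\to T$ be the unique maps with $g=\pi_H(g)\pi_T(g)$ for all $g\in G$. Suppose $G$ has a $k$-paradoxical decomposition with translating sets $S_1,\ldots,S_k$ where $1\in S_1$, and let $S=\bigcup_{i=1}^k S_i$. Let $F$ be a finite nonempty subset of $T$, put $\Phi_i=\pi_T(FS_i^{-1})$, $\Phi=\pi_T(FS^{-1})=\bigcup_{i=1}^k\Phi_i$, and $S_i'=\Phi_iS_iF^{-1}\cap H$. Then: (i) If $|\Phi|=|F|$, then $H$ has a $k$-paradoxical decomposition with translating sets $S_1',\ldots,S_k'$; consequently $\mathcal{T}(H)\leq\sum_{i=1}^k|S_i'|$. (ii) If $|\Phi|\leq\frac{k}{2}|F|$, then $H$ has a $2$-paradoxical decomposition with total translating set $\bigcup_{i=1}^kS_i'$; consequently $\mathcal{T}(H)\leq 2\sum_{i=1}^k|S_i'|$.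
   Context: A right transversal of $H$ in $G$ is a subset containing exactly one element of each right coset $Hg$. For $k\geq 2$, a group $G$ admits a $k$-paradoxical decomposition with translating sets $S_1=\{g_{1,1},\ldots,g_{1,n_1}\},\ldots,S_k=\{g_{k,1},\ldots,g_{k,n_k}\}$ (finite subsets of $G$) if there are pairwise disjoint subsets $P_{i,j}$ ($1\le i\le k$, $1\le j\le n_i$) of $G$ with $G=\bigcup_{j=1}^{n_i}P_{i,j}g_{i,j}$ for each $i$; the set $\bigcup_i S_i$ is the total translating set. A $2$-paradoxical decomposition is a paradoxical decomposition, and the Tarski number $\mathcal{T}(G)$ of a non-amenable group is the minimum of $|S_1|+|S_2|$ over all $2$-paradoxical decompositions (equivalently, the minimal number of pieces $m+n$ in $G=\bigcup_{i=1}^mP_ig_i=\bigcup_{j=1}^nQ_jh_j$ with disjoint pieces). *)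

theory Defs
  imports "HOL-Algebra.Algebra"
begin

definition amenable :: "('a, 'b) monoid_scheme \<Rightarrow> bool" where
  "amenable G \<longleftrightarrow> (\<exists>\<mu> :: 'a set \<Rightarrow> real.
      \<mu> (carrier G) = 1
    \<and> (\<forall>A. A \<subseteq> carrier G \<longrightarrow> 0 \<le> \<mu> A)
    \<and> (\<forall>A B. A \<subseteq> carrier G \<longrightarrow> B \<subseteq> carrier G \<longrightarrow> A \<inter> B = {}
            \<longrightarrow> \<mu> (A \<union> B) = \<mu> A + \<mu> B)
    \<and> (\<forall>g\<in>carrier G. \<forall>A. A \<subseteq> carrier G \<longrightarrow> \<mu> (g <#\<^bsub>G\<^esub> A) = \<mu> A))"

definition k_paradoxical ::
  "('a, 'b) monoid_scheme \<Rightarrow> nat \<Rightarrow> (nat \<Rightarrow> 'a set) \<Rightarrow> bool" where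
  "k_paradoxical G k S \<longleftrightarrow> 2 \<le> k
    \<and> (\<forall>i\<in>{1..k}. finite (S i) \<and> S i \<subseteq> carrier G)
    \<and> (\<exists>P :: nat \<Rightarrow> 'a \<Rightarrow> 'a set.
         (\<forall>i\<in>{1..k}. \<forall>g\<in>S i. P i g \<subseteq> carrier G)
       \<and> (\<forall>i\<in>{1..k}. \<forall>g\<in>S i. \<forall>j\<in>{1..k}. \<forall>h\<in>S j.
            (i, g) \<noteq> (j, h) \<longrightarrow> P i g \<inter> P j h = {})
       \<and> (\<forall>i\<in>{1..k}. carrier G = (\<Union>g\<in>S i. P i g #>\<^bsub>G\<^esub> g)))"

definition tarski_number :: "('a, 'b) monoid_scheme \<Rightarrow> nat" where
  "tarski_number G =
     (LEAST n. \<exists>S. k_paradoxical G 2 S \<and> n = card (S 1) + card (S 2))"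

definition right_transversal ::
  "('a, 'b) monoid_scheme \<Rightarrow> 'a set \<Rightarrow> 'a set \<Rightarrow> bool" where
  "right_transversal G H T \<longleftrightarrow> T \<subseteq> carrier G
     \<and> (\<forall>g\<in>carrier G. \<exists>!t. t \<in> T \<and> t \<in> H #>\<^bsub>G\<^esub> g)"

end

theory Submission
  imports Defs
begin

text \<open>A k-paradoxical decomposition of a group K with translating sets S is the same as an injection
  \<nu> on K \<times> {1..k} with \<nu> (x, i) \<in> x S i\<inverse>, and by Hall's marriage theorem (for families of
  finite sets, via Zorn's lemma) such an injection exists iff every finite B \<subseteq> K \<times> {1..k} has at
  least |B| neighbours. For B \<subseteq> H \<times> {1..k}, the unique factorisation g = piH g \<cdot> piT g turns the
  injection for G into an injection of B \<times> F into N(B) \<Phi>, where N(B) is the neighbourhood of B for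
  the sets S': indeed h f s\<inverse> = (h \<sigma>\<inverse>) \<phi> with \<sigma> = piH (f s\<inverse>)\<inverse> \<in> S' i and
  \<phi> = piT (f s\<inverse>) \<in> \<Phi>. Hence |B| |F| \<le> |N(B)| |\<Phi>|. If |\<Phi>| = |F| this is Hall's condition
  for H and S'; if |\<Phi>| \<le> k |F| / 2, taking B = A \<times> {1..k} shows that every finite A \<subseteq> H has at
  least 2 |A| neighbours for the union U of the S' i, which is Hall's condition for a 2-paradoxical
  decomposition of H with both translating sets equal to U.\<close>

section \<open>Hall's marriage theorem for families of finite sets\<close>

definition hall_condition :: "'l set \<Rightarrow> ('l \<Rightarrow> 'r set) \<Rightarrow> bool" where
  "hall_condition L N \<longleftrightarrow> (\<forall>B\<subseteq>L. finite B \<longrightarrow> card B \<le> card (\<Union>(N ` B)))"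

lemma hall_condition_cong:
  "(\<And>l. l \<in> L \<Longrightarrow> N l = N' l) \<Longrightarrow> hall_condition L N \<longleftrightarrow> hall_condition L N'"
  unfolding hall_condition_def by (metis (no_types, lifting) SUP_cong subsetD)

lemma hall_condition_Times:
  assumes "\<forall>A\<subseteq>L. finite A \<longrightarrow> n * card A \<le> card (\<Union>(M ` A))"
  shows "hall_condition (L \<times> {1..n}) (\<lambda>l. M (fst l))"
  unfolding hall_condition_def
proof (intro allI impI)
  fix B assume B: "B \<subseteq> L \<times> {1..n}" "finite B"
  then have "B \<subseteq> fst ` B \<times> {1..n}"
    by force
  then have "card B \<le> card (fst ` B \<times> {1..n})"
    using B by (intro card_mono) auto
  also have "\<dots> = n * card (fst ` B)"
    by (simp add: card_cartesian_product)
  also have "\<dots> \<le> card (\<Union>(M ` fst ` B))"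
    using B by (intro assms[rule_format]) auto
  finally show "card B \<le> card (\<Union>l\<in>B. M (fst l))"
    by (simp add: image_image)
qed

lemma hall_condition_Union_chain:
  assumes hall: "hall_condition L N" and fin: "\<forall>l\<in>L. finite (N l)"
    and chain: "subset.chain {R. hall_condition L (\<lambda>l. N l - R `` {l})} C"
  shows "hall_condition L (\<lambda>l. N l - \<Union>C `` {l})"
proof (cases "C = {}")
  case True
  then show ?thesis
    using hall by simp
next
  case False
  show ?thesis
    unfolding hall_condition_def
  proof (intro allI impI)
    fix B assume B: "B \<subseteq> L" "finite B"
    have "finite (Sigma B N \<inter> \<Union>C)"
      using B fin by blast
    then obtain R where R: "R \<in> C" "Sigma B N \<inter> \<Union>C \<subseteq> R"
      using finite_subset_Union_chain[OF _ _ False chain] by blast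
    then have "hall_condition L (\<lambda>l. N l - R `` {l})"
      using chain by (auto simp: subset.chain_def)
    moreover have "N l - R `` {l} = N l - \<Union>C `` {l}" if "l \<in> B" for l
      using R that by blast
    ultimately show "card B \<le> card (\<Union>l\<in>B. N l - \<Union>C `` {l})"
      using B unfolding hall_condition_def by (metis (no_types, lifting) SUP_cong)
  qed
qed

lemma hall_condition_delete_critical:
  assumes hall: "hall_condition L M" and l: "l \<in> L"
    and del: "\<not> hall_condition L (M(l := M l - {c}))"
  obtains D where "D \<subseteq> L - {l}" "finite D" "card (\<Union>(M ` D) \<union> (M l - {c})) \<le> card D"
proof -
  obtain B where B: "B \<subseteq> L" "finite B" and lt: "card (\<Union>((M(l := M l - {c})) ` B)) < card B"
    using del unfolding hall_condition_def by (auto simp: not_le)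
  have "l \<in> B"
  proof (rule ccontr)
    assume "l \<notin> B"
    then have "\<Union>((M(l := M l - {c})) ` B) = \<Union>(M ` B)" by auto
    then show False using hall B lt unfolding hall_condition_def by (metis not_le)
  qed
  then have "\<Union>((M(l := M l - {c})) ` B) = \<Union>(M ` (B - {l})) \<union> (M l - {c})"
    by auto
  moreover have "card B = Suc (card (B - {l}))"
    using B(2) \<open>l \<in> B\<close> by (rule card_Suc_Diff1[symmetric])
  ultimately have "card (\<Union>(M ` (B - {l})) \<union> (M l - {c})) \<le> card (B - {l})"
    using lt by simp
  moreover have "B - {l} \<subseteq> L - {l}" "finite (B - {l})"
    using B by auto
  ultimately show thesis
    using that by blast
qed

lemma hall_condition_delete:
  assumes hall: "hall_condition L M" and fin: "\<forall>l\<in>L. finite (M l)" and l: "l \<in> L"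
    and ab: "a \<in> M l" "b \<in> M l" "a \<noteq> b"
  shows "hall_condition L (M(l := M l - {a})) \<or> hall_condition L (M(l := M l - {b}))"
proof (rule ccontr)
  assume "\<not> ?thesis"
  then have del_a: "\<not> hall_condition L (M(l := M l - {a}))"
    and del_b: "\<not> hall_condition L (M(l := M l - {b}))"
    by simp_all
  obtain D where D: "D \<subseteq> L - {l}" "finite D" "card (\<Union>(M ` D) \<union> (M l - {a})) \<le> card D"
    using hall l del_a by (rule hall_condition_delete_critical)
  obtain E where E: "E \<subseteq> L - {l}" "finite E" "card (\<Union>(M ` E) \<union> (M l - {b})) \<le> card E"
    using hall l del_b by (rule hall_condition_delete_critical)
  define U where "U = \<Union>(M ` D) \<union> (M l - {a})"
  define V where "V = \<Union>(M ` E) \<union> (M l - {b})"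
  have fin_UV: "finite U" "finite V"
    using D E fin l by (auto simp: U_def V_def)
  text \<open>Hall's condition for D \<union> E \<union> {l} and D \<inter> E contradicts submodularity of card.\<close>
  have "card (insert l (D \<union> E)) \<le> card (\<Union>(M ` insert l (D \<union> E)))"
    using D E l by (intro hall[unfolded hall_condition_def, rule_format]) auto
  also have "\<dots> \<le> card (U \<union> V)"
    using ab fin_UV by (intro card_mono) (auto simp: U_def V_def)
  finally have union: "Suc (card (D \<union> E)) \<le> card (U \<union> V)"
    using D E by (simp add: subset_Diff_insert)
  have "card (D \<inter> E) \<le> card (\<Union>(M ` (D \<inter> E)))"
    using D E by (intro hall[unfolded hall_condition_def, rule_format]) auto
  also have "\<dots> \<le> card (U \<inter> V)"
    using fin_UV by (intro card_mono) (auto simp: U_def V_def)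
  finally have inter: "card (D \<inter> E) \<le> card (U \<inter> V)" .
  show False
    using union inter card_Un_Int[OF D(2) E(2)] card_Un_Int[OF fin_UV] D(3) E(3)
    unfolding U_def V_def by linarith
qed

lemma hall_condition_minimal_singleton:
  assumes hall: "hall_condition L M" and fin: "\<forall>l\<in>L. finite (M l)" and l: "l \<in> L"
    and minimal: "\<forall>c\<in>M l. \<not> hall_condition L (M(l := M l - {c}))"
  shows "\<exists>r. M l = {r}"
proof -
  have "card {l} \<le> card (\<Union>(M ` {l}))"
    using l by (intro hall[unfolded hall_condition_def, rule_format]) auto
  then obtain a where a: "a \<in> M l"
    by fastforce
  have "b = a" if "b \<in> M l" for b
    using hall_condition_delete[OF hall fin l a \<open>b \<in> M l\<close>] minimal a \<open>b \<in> M l\<close> by blast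
  then show ?thesis
    using a by blast
qed

lemma inj_on_if_hall_condition_singleton:
  assumes "hall_condition L (\<lambda>l. {f l})"
  shows "inj_on f L"
proof (rule inj_onI, rule ccontr)
  fix x y assume xy: "x \<in> L" "y \<in> L" "f x = f y" "x \<noteq> y"
  have "card {x, y} \<le> card (\<Union>l\<in>{x, y}. {f l})"
    using xy by (intro assms[unfolded hall_condition_def, rule_format]) auto
  then show False
    using xy by simp
qed

theorem marriage_theorem:
  assumes hall: "hall_condition L N" and fin: "\<forall>l\<in>L. finite (N l)"
  obtains f where "inj_on f L" "\<forall>l\<in>L. f l \<in> N l"
proof -
  text \<open>Zorn's lemma on the sets R of deleted edges (l, r) that keep Hall's condition; for a
    maximal R no further edge can be deleted.\<close>
  define A where "A = {R. hall_condition L (\<lambda>l. N l - R `` {l})}"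
  have "\<Union>C \<in> A" if "C \<in> chains A" for C
    using that hall_condition_Union_chain[OF hall fin] by (simp add: A_def chains_alt_def)
  then obtain R where "R \<in> A" and max: "\<forall>R'\<in>A. R \<subseteq> R' \<longrightarrow> R' = R"
    using Zorn_Lemma by blast
  define M where "M = (\<lambda>l. N l - R `` {l})"
  have hall_M: "hall_condition L M"
    using \<open>R \<in> A\<close> by (simp add: A_def M_def)
  have fin_M: "\<forall>l\<in>L. finite (M l)"
    using fin by (simp add: M_def)
  have "\<exists>r. M l = {r}" if l: "l \<in> L" for l
  proof (rule hall_condition_minimal_singleton[OF hall_M fin_M l], intro ballI notI)
    fix c assume c: "c \<in> M l" and "hall_condition L (M(l := M l - {c}))"
    moreover have "M(l := M l - {c}) = (\<lambda>l'. N l' - insert (l, c) R `` {l'})"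
      by (auto simp: M_def fun_eq_iff)
    ultimately have "insert (l, c) R \<in> A"
      by (simp add: A_def)
    then have "insert (l, c) R = R"
      using max by blast
    then show False
      using c by (auto simp: M_def)
  qed
  then obtain f where f: "\<forall>l\<in>L. M l = {f l}"
    by metis
  then have "hall_condition L (\<lambda>l. {f l}) \<longleftrightarrow> hall_condition L M"
    by (intro hall_condition_cong) simp
  then have "hall_condition L (\<lambda>l. {f l})"
    using hall_M by blast
  then have "inj_on f L"
    by (rule inj_on_if_hall_condition_singleton)
  moreover have "\<forall>l\<in>L. f l \<in> N l"
    using f by (auto simp: M_def)
  ultimately show thesis
    using that by blast
qed

section \<open>Paradoxical decompositions as injections\<close>

text \<open>Pieces P give \<nu> (x, i) = x s\<inverse> for the s with x \<in> P i s #> s; conversely \<nu> gives the pieces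
  choice_pieces G \<nu> below.\<close>
definition inv_translates :: "('a, 'b) monoid_scheme \<Rightarrow> (nat \<Rightarrow> 'a set) \<Rightarrow> 'a \<times> nat \<Rightarrow> 'a set"
  where "inv_translates K S = (\<lambda>(x, i). (\<lambda>s. x \<otimes>\<^bsub>K\<^esub> inv\<^bsub>K\<^esub> s) ` S i)"

lemma (in group) mem_UN_r_coset_iff:
  assumes x: "x \<in> carrier G" and \<Sigma>: "\<Sigma> \<subseteq> carrier G" and Q: "\<forall>s\<in>\<Sigma>. Q s \<subseteq> carrier G"
  shows "x \<in> (\<Union>s\<in>\<Sigma>. Q s #> s) \<longleftrightarrow> (\<exists>s\<in>\<Sigma>. x \<otimes> inv s \<in> Q s)"
proof -
  have "x \<in> Q s #> s \<longleftrightarrow> x \<otimes> inv s \<in> Q s" if s: "s \<in> \<Sigma>" for s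
  proof
    assume "x \<in> Q s #> s"
    then obtain p where "p \<in> Q s" "x = p \<otimes> s"
      unfolding r_coset_def by blast
    moreover have "p \<in> carrier G" "s \<in> carrier G"
      using Q \<Sigma> s \<open>p \<in> Q s\<close> by blast+
    ultimately show "x \<otimes> inv s \<in> Q s"
      by (simp add: m_assoc)
  next
    assume "x \<otimes> inv s \<in> Q s"
    moreover have "x = x \<otimes> inv s \<otimes> s"
      using x \<Sigma> s by (auto simp: m_assoc)
    ultimately show "x \<in> Q s #> s"
      unfolding r_coset_def by blast
  qed
  then show ?thesis
    by blast
qed

lemma (in group) k_paradoxical_inj_choice:
  assumes "k_paradoxical G k S"
  obtains \<nu> where "inj_on \<nu> (carrier G \<times> {1..k})"
    "\<forall>l\<in>carrier G \<times> {1..k}. \<nu> l \<in> inv_translates G S l"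
proof -
  have S: "\<forall>i\<in>{1..k}. S i \<subseteq> carrier G"
    using assms by (simp add: k_paradoxical_def)
  obtain P where P: "\<forall>i\<in>{1..k}. \<forall>s\<in>S i. P i s \<subseteq> carrier G"
    and disj: "\<forall>i\<in>{1..k}. \<forall>s\<in>S i. \<forall>j\<in>{1..k}. \<forall>t\<in>S j. (i, s) \<noteq> (j, t) \<longrightarrow> P i s \<inter> P j t = {}"
    and cover: "\<forall>i\<in>{1..k}. carrier G = (\<Union>s\<in>S i. P i s #> s)"
    using assms unfolding k_paradoxical_def by (elim conjE exE) (rule that)
  have "\<exists>s. s \<in> S i \<and> x \<otimes> inv s \<in> P i s" if x: "x \<in> carrier G" and i: "i \<in> {1..k}" for x i
  proof -
    from x have "x \<in> (\<Union>s\<in>S i. P i s #> s)"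
      by (simp only: cover[rule_format, OF i])
    then show ?thesis
      using mem_UN_r_coset_iff[OF x, of "S i" "P i"] S P i by blast
  qed
  then obtain \<sigma> where \<sigma>: "\<And>x i. x \<in> carrier G \<Longrightarrow> i \<in> {1..k} \<Longrightarrow>
      \<sigma> x i \<in> S i \<and> x \<otimes> inv \<sigma> x i \<in> P i (\<sigma> x i)"
    by metis
  define \<nu> where "\<nu> = (\<lambda>(x, i). x \<otimes> inv \<sigma> x i)"
  have "inj_on \<nu> (carrier G \<times> {1..k})"
  proof (rule inj_onI, clarify)
    fix x i y j assume x: "x \<in> carrier G" "i \<in> {1..k}" and y: "y \<in> carrier G" "j \<in> {1..k}"
      and eq: "\<nu> (x, i) = \<nu> (y, j)"
    then have "P i (\<sigma> x i) \<inter> P j (\<sigma> y j) \<noteq> {}"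
      using \<sigma>[OF x] \<sigma>[OF y] unfolding \<nu>_def by auto
    then have "i = j" "\<sigma> x i = \<sigma> y j"
      using disj x y \<sigma>[OF x] \<sigma>[OF y] by blast+
    moreover have "\<sigma> x i \<in> carrier G"
      using S x \<sigma>[OF x] by blast
    ultimately show "x = y \<and> i = j"
      using eq x y unfolding \<nu>_def by simp
  qed
  moreover have "\<forall>l\<in>carrier G \<times> {1..k}. \<nu> l \<in> inv_translates G S l"
    using \<sigma> by (auto simp: \<nu>_def inv_translates_def)
  ultimately show thesis
    using that by blast
qed

definition choice_pieces :: "('a, 'b) monoid_scheme \<Rightarrow> ('a \<times> nat \<Rightarrow> 'a) \<Rightarrow> nat \<Rightarrow> 'a \<Rightarrow> 'a set"
  where "choice_pieces K \<nu> i s = {\<nu> (x, i) | x. x \<in> carrier K \<and> \<nu> (x, i) = x \<otimes>\<^bsub>K\<^esub> inv\<^bsub>K\<^esub> s}"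

lemma (in group) choice_pieces_subset_carrier:
  "s \<in> carrier G \<Longrightarrow> choice_pieces G \<nu> i s \<subseteq> carrier G"
  by (auto simp: choice_pieces_def)

lemma (in group) choice_pieces_disjoint:
  assumes inj: "inj_on \<nu> (carrier G \<times> I)" and ij: "i \<in> I" "j \<in> I"
    and st: "s \<in> carrier G" "t \<in> carrier G" and ne: "(i, s) \<noteq> (j, t)"
  shows "choice_pieces G \<nu> i s \<inter> choice_pieces G \<nu> j t = {}"
proof (rule ccontr)
  assume "choice_pieces G \<nu> i s \<inter> choice_pieces G \<nu> j t \<noteq> {}"
  then obtain x y where x: "x \<in> carrier G" "\<nu> (x, i) = x \<otimes> inv s"
    and y: "y \<in> carrier G" "\<nu> (y, j) = y \<otimes> inv t" and eq: "\<nu> (x, i) = \<nu> (y, j)"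
    unfolding choice_pieces_def by blast
  have "(x, i) = (y, j)"
    using inj_onD[OF inj eq] x(1) y(1) ij by blast
  then have "inv s = inv t"
    using x y eq st by simp
  then have "s = t"
    by (metis inv_inv st)
  then show False
    using ne \<open>(x, i) = (y, j)\<close> by simp
qed

lemma (in group) choice_pieces_cover:
  assumes S: "S i \<subseteq> carrier G" and \<nu>: "\<forall>x\<in>carrier G. \<nu> (x, i) \<in> inv_translates G S (x, i)"
  shows "carrier G = (\<Union>s\<in>S i. choice_pieces G \<nu> i s #> s)"
proof (intro equalityI subsetI)
  fix x assume x: "x \<in> carrier G"
  then obtain s where s: "s \<in> S i" "\<nu> (x, i) = x \<otimes> inv s"
    using \<nu> by (auto simp: inv_translates_def)
  then have "\<nu> (x, i) \<in> choice_pieces G \<nu> i s"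
    using x unfolding choice_pieces_def by blast
  then have "x \<otimes> inv s \<in> choice_pieces G \<nu> i s"
    using s(2) by simp
  moreover have "\<forall>s\<in>S i. choice_pieces G \<nu> i s \<subseteq> carrier G"
    using S choice_pieces_subset_carrier by blast
  ultimately show "x \<in> (\<Union>s\<in>S i. choice_pieces G \<nu> i s #> s)"
    using mem_UN_r_coset_iff[of x "S i" "choice_pieces G \<nu> i"] x S s(1) by blast
next
  fix x assume "x \<in> (\<Union>s\<in>S i. choice_pieces G \<nu> i s #> s)"
  then obtain s where s: "s \<in> S i" "x \<in> choice_pieces G \<nu> i s #> s"
    by blast
  have "choice_pieces G \<nu> i s #> s \<subseteq> carrier G"
    using S s(1) by (intro r_coset_subset_G choice_pieces_subset_carrier) blast+
  then show "x \<in> carrier G"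
    using s(2) by blast
qed

lemma (in group) k_paradoxical_if_inj_choice:
  assumes k: "2 \<le> k" and S: "\<forall>i\<in>{1..k}. finite (S i) \<and> S i \<subseteq> carrier G"
    and inj: "inj_on \<nu> (carrier G \<times> {1..k})"
    and \<nu>: "\<forall>l\<in>carrier G \<times> {1..k}. \<nu> l \<in> inv_translates G S l"
  shows "k_paradoxical G k S"
proof -
  have S_G: "\<And>i s. i \<in> {1..k} \<Longrightarrow> s \<in> S i \<Longrightarrow> s \<in> carrier G"
    using S by blast
  have "\<forall>i\<in>{1..k}. \<forall>s\<in>S i. choice_pieces G \<nu> i s \<subseteq> carrier G"
    using S_G choice_pieces_subset_carrier by blast
  moreover have "\<forall>i\<in>{1..k}. \<forall>s\<in>S i. \<forall>j\<in>{1..k}. \<forall>t\<in>S j. (i, s) \<noteq> (j, t) \<longrightarrow>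
      choice_pieces G \<nu> i s \<inter> choice_pieces G \<nu> j t = {}"
    using S_G by (intro ballI impI choice_pieces_disjoint[OF inj]) blast+
  moreover have "\<forall>i\<in>{1..k}. carrier G = (\<Union>s\<in>S i. choice_pieces G \<nu> i s #> s)"
  proof
    fix i assume i: "i \<in> {1..k}"
    then show "carrier G = (\<Union>s\<in>S i. choice_pieces G \<nu> i s #> s)"
      using S \<nu> by (intro choice_pieces_cover) blast+
  qed
  ultimately show ?thesis
    unfolding k_paradoxical_def using k S by blast
qed

lemma (in group) subgroup_k_paradoxical_if_hall_condition:
  assumes H: "subgroup H G" and k: "2 \<le> k" and S: "\<forall>i\<in>{1..k}. finite (S i) \<and> S i \<subseteq> H"
    and hall: "hall_condition (H \<times> {1..k}) (inv_translates G S)"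
  shows "k_paradoxical (G\<lparr>carrier := H\<rparr>) k S"
proof -
  interpret K: group "G\<lparr>carrier := H\<rparr>"
    using H by (rule subgroup.subgroup_is_group) (rule is_group)
  have "inv_translates (G\<lparr>carrier := H\<rparr>) S l = inv_translates G S l" if "l \<in> H \<times> {1..k}" for l
    using H S that by (force simp: inv_translates_def)
  then have "hall_condition (H \<times> {1..k}) (inv_translates (G\<lparr>carrier := H\<rparr>) S)"
    using hall hall_condition_cong by blast
  moreover have "\<forall>l\<in>H \<times> {1..k}. finite (inv_translates (G\<lparr>carrier := H\<rparr>) S l)"
    using S by (auto simp: inv_translates_def)
  ultimately obtain \<nu> where "inj_on \<nu> (H \<times> {1..k})"
    "\<forall>l\<in>H \<times> {1..k}. \<nu> l \<in> inv_translates (G\<lparr>carrier := H\<rparr>) S l"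
    by (metis marriage_theorem)
  then show ?thesis
    using K.k_paradoxical_if_inj_choice k S by simp
qed

lemma k_paradoxical_restrict:
  assumes "k_paradoxical K k S" and "2 \<le> m" and "m \<le> k"
  shows "k_paradoxical K m S"
proof -
  obtain P where fin: "\<forall>i\<in>{1..k}. finite (S i) \<and> S i \<subseteq> carrier K"
    and P: "\<forall>i\<in>{1..k}. \<forall>g\<in>S i. P i g \<subseteq> carrier K"
    and disj: "\<forall>i\<in>{1..k}. \<forall>g\<in>S i. \<forall>j\<in>{1..k}. \<forall>h\<in>S j. (i, g) \<noteq> (j, h) \<longrightarrow> P i g \<inter> P j h = {}"
    and cover: "\<forall>i\<in>{1..k}. carrier K = (\<Union>g\<in>S i. P i g #>\<^bsub>K\<^esub> g)"
    using assms(1) unfolding k_paradoxical_def by (elim conjE exE) (rule that)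
  have sub: "{1..m} \<subseteq> {1..k}"
    using assms(3) by auto
  show ?thesis
    unfolding k_paradoxical_def
  proof (intro conjI exI[of _ P] ballI impI)
    fix i assume i: "i \<in> {1..m}"
    then show "finite (S i)" "S i \<subseteq> carrier K" "carrier K = (\<Union>g\<in>S i. P i g #>\<^bsub>K\<^esub> g)"
      using fin cover sub by blast+
    show "P i g \<subseteq> carrier K" if "g \<in> S i" for g
      using P sub i that by blast
    show "P i g \<inter> P j h = {}" if "g \<in> S i" "j \<in> {1..m}" "h \<in> S j" "(i, g) \<noteq> (j, h)" for g j h
      using disj sub i that by blast
  qed (rule assms(2))
qed

lemma tarski_number_le_sum_card:
  assumes "k_paradoxical K k S"
  shows "tarski_number K \<le> (\<Sum>i\<in>{1..k}. card (S i))"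
proof -
  have k: "2 \<le> k"
    using assms by (simp add: k_paradoxical_def)
  have "k_paradoxical K 2 S"
    using assms order_refl k by (rule k_paradoxical_restrict)
  then have "tarski_number K \<le> card (S 1) + card (S 2)"
    unfolding tarski_number_def by (intro Least_le) blast
  also have "\<dots> = (\<Sum>i\<in>{1, 2}. card (S i))"
    by simp
  also have "\<dots> \<le> (\<Sum>i\<in>{1..k}. card (S i))"
    using k by (intro sum_mono2) auto
  finally show ?thesis .
qed

section \<open>Transfer to a subgroup along a right transversal\<close>

lemma (in group) right_transversal_inj_on_mult:
  assumes H: "subgroup H G" and T: "right_transversal G H T"
  shows "inj_on (\<lambda>(h, t). h \<otimes> t) (H \<times> T)"
proof (rule inj_onI, clarify)
  fix h t h' t' assume ht: "h \<in> H" "t \<in> T" "h' \<in> H" "t' \<in> T" and eq: "h \<otimes> t = h' \<otimes> t'"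
  have TG: "T \<subseteq> carrier G"
    using T unfolding right_transversal_def by blast
  have coset: "u \<in> H #> (g \<otimes> u)" if "g \<in> H" "u \<in> T" for g u
  proof -
    have "u = inv g \<otimes> (g \<otimes> u)"
      using that H TG by (simp add: m_assoc[symmetric] subgroup.mem_carrier subsetD)
    then show ?thesis
      using that H unfolding r_coset_def by (auto intro: subgroup.m_inv_closed)
  qed
  have "h \<otimes> t \<in> carrier G"
    using ht H TG by (auto intro: subgroup.mem_carrier)
  then have "t = t'"
    using T coset[of h t] coset[of h' t'] ht eq unfolding right_transversal_def by metis
  moreover have "h \<in> carrier G" "h' \<in> carrier G" "t' \<in> carrier G"
    using ht H TG by (auto intro: subgroup.mem_carrier)
  ultimately show "h = h' \<and> t = t'"
    using eq by simp
qed

text \<open>For z = f s\<inverse> = h \<phi> with h \<in> H and \<phi> \<in> T one has h\<inverse> = \<phi> s f\<inverse>.\<close>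
lemma (in group) inv_piH_mem_set_mult:
  assumes H: "subgroup H G" and T: "T \<subseteq> carrier G"
    and pi: "\<forall>g\<in>carrier G. piH g \<in> H \<and> piT g \<in> T \<and> g = piH g \<otimes> piT g"
    and f: "f \<in> F" "F \<subseteq> carrier G" and s: "s \<in> \<Sigma>" "\<Sigma> \<subseteq> carrier G"
  shows "inv (piH (f \<otimes> inv s)) \<in> (piT ` (F <#> set_inv \<Sigma>) <#> \<Sigma> <#> set_inv F) \<inter> H"
proof -
  define z where "z = f \<otimes> inv s"
  have fs: "f \<in> carrier G" "s \<in> carrier G"
    using f s by auto
  then have zG: "z \<in> carrier G"
    by (simp add: z_def)
  then have zH: "piH z \<in> H" and zT: "piT z \<in> T" and z_eq: "piH z \<otimes> piT z = z"
    using pi by auto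
  have zc: "piH z \<in> carrier G" "piT z \<in> carrier G"
    using zH zT T subgroup.mem_carrier[OF H] by auto
  have inv_z: "inv z = s \<otimes> inv f"
    using fs by (simp add: z_def inv_mult_group)
  have "inv (piH z) = piT z \<otimes> inv (piH z \<otimes> piT z)"
    using zc by (simp add: inv_mult_group m_assoc[symmetric])
  also have "\<dots> = piT z \<otimes> inv z"
    by (simp only: z_eq)
  also have "\<dots> = piT z \<otimes> s \<otimes> inv f"
    using fs zc inv_z by (simp add: m_assoc)
  finally have "inv (piH z) = piT z \<otimes> s \<otimes> inv f" .
  moreover have "piT z \<in> piT ` (F <#> set_inv \<Sigma>)"
    using f s unfolding z_def set_mult_def SET_INV_def by blast
  moreover have "inv (piH z) \<in> H"
    using zH by (rule subgroup.m_inv_closed[OF H])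
  ultimately show ?thesis
    using f s unfolding z_def set_mult_def SET_INV_def by blast
qed

lemma (in group) inj_on_inj_choice_mult_transversal:
  assumes H: "subgroup H G" and T: "right_transversal G H T"
    and inj: "inj_on \<nu> (carrier G \<times> I)" and B: "B \<subseteq> H \<times> I" and F: "F \<subseteq> T"
  shows "inj_on (\<lambda>((h, i), f). \<nu> (h \<otimes> f, i)) (B \<times> F)"
proof (rule inj_onI)
  fix p p' assume "p \<in> B \<times> F" "p' \<in> B \<times> F"
    and "(\<lambda>((h, i), f). \<nu> (h \<otimes> f, i)) p = (\<lambda>((h, i), f). \<nu> (h \<otimes> f, i)) p'"
  moreover obtain h i f h' i' f' where p: "p = ((h, i), f)" "p' = ((h', i'), f')"
    by (metis prod.collapse)
  ultimately have mem: "h \<in> H" "i \<in> I" "f \<in> T" "h' \<in> H" "i' \<in> I" "f' \<in> T"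
    and eq: "\<nu> (h \<otimes> f, i) = \<nu> (h' \<otimes> f', i')"
    using B F by auto
  have "T \<subseteq> carrier G"
    using T unfolding right_transversal_def by blast
  then have "h \<otimes> f \<in> carrier G" "h' \<otimes> f' \<in> carrier G"
    using mem subgroup.mem_carrier[OF H] by auto
  then have "h \<otimes> f = h' \<otimes> f'" and "i = i'"
    using inj_onD[OF inj eq] mem by auto
  moreover have "(h, f) = (h', f')"
    using inj_onD[OF right_transversal_inj_on_mult[OF H T], of "(h, f)" "(h', f')"] mem
      \<open>h \<otimes> f = h' \<otimes> f'\<close> by simp
  ultimately show "p = p'"
    using p by simp
qed

lemma finite_set_mult: "finite A \<Longrightarrow> finite B \<Longrightarrow> finite (A <#>\<^bsub>G\<^esub> B)"
  by (simp add: set_mult_def)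

lemma finite_set_inv: "finite A \<Longrightarrow> finite (set_inv\<^bsub>G\<^esub> A)"
  by (simp add: SET_INV_def)

lemma card_set_mult_le:
  assumes "finite A" "finite B"
  shows "card (A <#>\<^bsub>G\<^esub> B) \<le> card A * card B"
proof -
  have "A <#>\<^bsub>G\<^esub> B = (\<lambda>(a, b). a \<otimes>\<^bsub>G\<^esub> b) ` (A \<times> B)"
    unfolding set_mult_def by auto
  also have "card \<dots> \<le> card (A \<times> B)"
    using assms by (intro card_image_le) simp
  finally show ?thesis
    by (simp add: card_cartesian_product)
qed

text \<open>Write f s\<inverse> = a \<phi> with a \<in> H and \<phi> \<in> T; then h f s\<inverse> = (h \<sigma>\<inverse>) \<phi> with \<sigma> = a\<inverse>.\<close>
lemma (in group) inv_translates_subset_set_mult: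
  assumes H: "subgroup H G" and T: "T \<subseteq> carrier G"
    and pi: "\<forall>g\<in>carrier G. piH g \<in> H \<and> piT g \<in> T \<and> g = piH g \<otimes> piT g"
    and S: "S i \<subseteq> carrier G" and h: "h \<in> H" and f: "f \<in> carrier G"
    and shift: "\<forall>s\<in>S i. piT (f \<otimes> inv s) \<in> \<Phi> \<and> inv (piH (f \<otimes> inv s)) \<in> S' i"
  shows "inv_translates G S (h \<otimes> f, i) \<subseteq> inv_translates G S' (h, i) <#> \<Phi>"
proof
  fix x assume "x \<in> inv_translates G S (h \<otimes> f, i)"
  then obtain s where s: "s \<in> S i" "x = h \<otimes> f \<otimes> inv s"
    by (auto simp: inv_translates_def)
  define z where "z = f \<otimes> inv s"
  have hG: "h \<in> carrier G" and zG: "z \<in> carrier G"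
    using h H S s(1) f by (auto simp: z_def intro: subgroup.mem_carrier)
  then have zc: "piH z \<in> carrier G" "piT z \<in> carrier G" and z_eq: "piH z \<otimes> piT z = z"
    using pi T subgroup.mem_carrier[OF H] by auto
  have "x = h \<otimes> z"
    using s(2) f S s(1) hG by (auto simp: z_def m_assoc)
  also have "\<dots> = (h \<otimes> inv (inv (piH z))) \<otimes> piT z"
    using hG zc z_eq by (simp add: m_assoc)
  finally have x: "x = (h \<otimes> inv (inv (piH z))) \<otimes> piT z" .
  have "inv (piH z) \<in> S' i" "piT z \<in> \<Phi>"
    using shift s(1) unfolding z_def by blast+
  then show "x \<in> inv_translates G S' (h, i) <#> \<Phi>"
    unfolding x inv_translates_def set_mult_def by blast
qed

text \<open>The map ((h, i), f) \<mapsto> \<nu> (h f, i) is injective on B \<times> F and lands in N \<Phi>, where N is the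
  neighbourhood of B for the translating sets S'.\<close>
lemma (in group) card_mult_le_card_inv_translates:
  assumes H: "subgroup H G" and T: "right_transversal G H T"
    and pi: "\<forall>g\<in>carrier G. piH g \<in> H \<and> piT g \<in> T \<and> g = piH g \<otimes> piT g"
    and S: "\<forall>i\<in>{1..k}. S i \<subseteq> carrier G"
    and inj: "inj_on \<nu> (carrier G \<times> {1..k})"
    and \<nu>: "\<forall>l\<in>carrier G \<times> {1..k}. \<nu> l \<in> inv_translates G S l"
    and F: "finite F" "F \<subseteq> T" and \<Phi>: "finite \<Phi>" and S': "\<forall>i\<in>{1..k}. finite (S' i)"
    and shift: "\<forall>i\<in>{1..k}. \<forall>f\<in>F. \<forall>s\<in>S i. piT (f \<otimes> inv s) \<in> \<Phi> \<and> inv (piH (f \<otimes> inv s)) \<in> S' i"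
    and B: "B \<subseteq> H \<times> {1..k}" "finite B"
  shows "card B * card F \<le> card (\<Union>(inv_translates G S' ` B)) * card \<Phi>"
proof -
  define N where "N = \<Union>(inv_translates G S' ` B)"
  define m where "m = (\<lambda>((h, i), f). \<nu> (h \<otimes> f, i))"
  have TG: "T \<subseteq> carrier G"
    using T unfolding right_transversal_def by blast
  have hf: "h \<otimes> f \<in> carrier G" if "h \<in> H" "f \<in> F" for h f
    using that H F TG by (auto intro: subgroup.mem_carrier)
  have "inj_on m (B \<times> F)"
    unfolding m_def using inj B(1) F(2) by (rule inj_on_inj_choice_mult_transversal[OF H T])
  then have "card (B \<times> F) = card (m ` (B \<times> F))"
    by (simp add: card_image)
  also have "m ` (B \<times> F) \<subseteq> N <#> \<Phi>"
  proof clarify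
    fix h i f assume hif: "(h, i) \<in> B" "f \<in> F"
    then have hi: "h \<in> H" "i \<in> {1..k}"
      using B by auto
    have "m ((h, i), f) \<in> inv_translates G S (h \<otimes> f, i)"
      using \<nu> hf[OF hi(1) hif(2)] hi(2) by (simp add: m_def)
    also have "\<dots> \<subseteq> inv_translates G S' (h, i) <#> \<Phi>"
      using S shift hi(2) hif(2) F TG
      by (intro inv_translates_subset_set_mult[OF H TG pi _ hi(1)]) auto
    also have "\<dots> \<subseteq> N <#> \<Phi>"
      using hif(1) unfolding N_def by (intro mono_set_mult) auto
    finally show "m ((h, i), f) \<in> N <#> \<Phi>" .
  qed
  then have "card (m ` (B \<times> F)) \<le> card (N <#> \<Phi>)"
    using B S' \<Phi> by (intro card_mono finite_set_mult) (auto simp: N_def inv_translates_def)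
  also have "\<dots> \<le> card N * card \<Phi>"
    using B S' \<Phi> by (intro card_set_mult_le) (auto simp: N_def inv_translates_def)
  finally show ?thesis
    by (simp add: N_def card_cartesian_product)
qed

lemma (in group) card_mult_le_card_inv_translates_transversal:
  assumes H: "subgroup H G" and T: "right_transversal G H T"
    and pi: "\<forall>g\<in>carrier G. piH g \<in> H \<and> piT g \<in> T \<and> g = piH g \<otimes> piT g"
    and G_par: "k_paradoxical G k S" and F: "finite F" "F \<subseteq> T"
    and B: "B \<subseteq> H \<times> {1..k}" "finite B"
  shows "card B * card F
    \<le> card (\<Union>(inv_translates G (\<lambda>i. (piT ` (F <#> set_inv (S i)) <#> S i <#> set_inv F) \<inter> H) ` B))
      * card (piT ` (F <#> set_inv (\<Union>i\<in>{1..k}. S i)))"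
proof -
  define \<Phi> where "\<Phi> = piT ` (F <#> set_inv (\<Union>i\<in>{1..k}. S i))"
  define S' where "S' i = (piT ` (F <#> set_inv (S i)) <#> S i <#> set_inv F) \<inter> H" for i
  have S: "\<forall>i\<in>{1..k}. finite (S i) \<and> S i \<subseteq> carrier G"
    using G_par unfolding k_paradoxical_def by blast
  obtain \<nu> where \<nu>: "inj_on \<nu> (carrier G \<times> {1..k})" "\<forall>l\<in>carrier G \<times> {1..k}. \<nu> l \<in> inv_translates G S l"
    using G_par by (rule k_paradoxical_inj_choice)
  have TG: "T \<subseteq> carrier G"
    using T unfolding right_transversal_def by blast
  have "\<forall>i\<in>{1..k}. \<forall>f\<in>F. \<forall>s\<in>S i. piT (f \<otimes> inv s) \<in> \<Phi> \<and> inv (piH (f \<otimes> inv s)) \<in> S' i"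
  proof (intro ballI conjI)
    fix i f s assume "i \<in> {1..k}" "f \<in> F" "s \<in> S i"
    then show "piT (f \<otimes> inv s) \<in> \<Phi>"
      unfolding \<Phi>_def set_mult_def SET_INV_def by blast
    show "inv (piH (f \<otimes> inv s)) \<in> S' i"
      unfolding S'_def using F S \<open>i \<in> {1..k}\<close> TG
      by (intro inv_piH_mem_set_mult[OF H TG pi \<open>f \<in> F\<close> _ \<open>s \<in> S i\<close>]) auto
  qed
  moreover have "finite \<Phi>" "\<forall>i\<in>{1..k}. finite (S' i)"
    using S F by (simp_all add: \<Phi>_def S'_def finite_set_mult finite_set_inv)
  ultimately have "card B * card F \<le> card (\<Union>(inv_translates G S' ` B)) * card \<Phi>"
    using card_mult_le_card_inv_translates[OF H T pi _ \<nu> F] S B by simp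
  then show ?thesis
    by (simp add: \<Phi>_def S'_def[abs_def])
qed

lemma (in group) subgroup_k_paradoxical_if_expanding:
  assumes H: "subgroup H G" and k: "2 \<le> k" and S': "\<forall>i\<in>{1..k}. finite (S' i) \<and> S' i \<subseteq> H"
    and F: "0 < card F" and card_\<Phi>: "card \<Phi> = card F"
    and expand: "\<forall>B\<subseteq>H \<times> {1..k}. finite B \<longrightarrow>
      card B * card F \<le> card (\<Union>(inv_translates G S' ` B)) * card \<Phi>"
  shows "k_paradoxical (G\<lparr>carrier := H\<rparr>) k S'"
proof -
  have "hall_condition (H \<times> {1..k}) (inv_translates G S')"
    using expand F card_\<Phi> unfolding hall_condition_def by simp
  then show ?thesis
    using subgroup_k_paradoxical_if_hall_condition H k S' by blast
qed

lemma (in group) subgroup_2_paradoxical_if_expanding: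
  assumes H: "subgroup H G" and k: "2 \<le> k" and S': "\<forall>i\<in>{1..k}. finite (S' i) \<and> S' i \<subseteq> H"
    and F: "0 < card F" and card_\<Phi>: "real (card \<Phi>) \<le> real k / 2 * real (card F)"
    and expand: "\<forall>B\<subseteq>H \<times> {1..k}. finite B \<longrightarrow>
      card B * card F \<le> card (\<Union>(inv_translates G S' ` B)) * card \<Phi>"
  shows "k_paradoxical (G\<lparr>carrier := H\<rparr>) 2 (\<lambda>_. \<Union>i\<in>{1..k}. S' i)"
proof -
  define U where "U = (\<Union>i\<in>{1..k}. S' i)"
  define M where "M a = (\<lambda>s. a \<otimes> inv s) ` U" for a
  text \<open>For B = A \<times> {1..k} the neighbourhood is \<Union>(M ` A), and the factor k cancels.\<close>
  have "2 * card A \<le> card (\<Union>(M ` A))" if A: "A \<subseteq> H" "finite A" for A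
  proof -
    have "\<Union>(inv_translates G S' ` (A \<times> {1..k})) = \<Union>(M ` A)"
      by (auto simp: inv_translates_def M_def U_def)
    then have "card (A \<times> {1..k}) * card F \<le> card (\<Union>(M ` A)) * card \<Phi>"
      using expand[rule_format, of "A \<times> {1..k}"] A by auto
    then have "k * card A * card F \<le> card (\<Union>(M ` A)) * card \<Phi>"
      by (simp add: card_cartesian_product mult.commute)
    then have "real (k * card A * card F) \<le> real (card (\<Union>(M ` A)) * card \<Phi>)"
      by (rule of_nat_mono)
    also have "\<dots> \<le> real (card (\<Union>(M ` A))) * (real k / 2 * real (card F))"
      unfolding of_nat_mult using card_\<Phi> by (rule mult_left_mono) simp
    finally have "real k * card F * real (2 * card A) \<le> real k * card F * card (\<Union>(M ` A))"
      by (simp add: algebra_simps)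
    then show ?thesis
      using k F by (simp add: mult_le_cancel_left_pos)
  qed
  then have "hall_condition (H \<times> {1..2::nat}) (\<lambda>l. M (fst l))"
    by (intro hall_condition_Times) blast
  moreover have "(\<lambda>l. M (fst l)) = inv_translates G (\<lambda>_. U)"
    by (auto simp: inv_translates_def M_def fun_eq_iff)
  moreover have "\<forall>i\<in>{1..2::nat}. finite U \<and> U \<subseteq> H"
    using S' by (auto simp: U_def)
  ultimately show ?thesis
    using subgroup_k_paradoxical_if_hall_condition[OF H order_refl] unfolding U_def by simp
qed

theorem proposition3p1:
  fixes G :: "('a, 'b) monoid_scheme"
    and H T F :: "'a set"
    and piH piT :: "'a \<Rightarrow> 'a"
    and k :: nat
    and S :: "nat \<Rightarrow> 'a set"
  assumes "group G"
    and "\<not> amenable G"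
    and "subgroup H G"
    and "right_transversal G H T"
    and "\<one>\<^bsub>G\<^esub> \<in> T"
    and "\<forall>g\<in>carrier G. piH g \<in> H \<and> piT g \<in> T \<and> g = piH g \<otimes>\<^bsub>G\<^esub> piT g"
    and "k_paradoxical G k S"
    and "\<one>\<^bsub>G\<^esub> \<in> S 1"
    and "finite F" and "F \<noteq> {}" and "F \<subseteq> T"
  defines "Phi \<equiv> (\<lambda>i. piT ` (F <#>\<^bsub>G\<^esub> set_inv\<^bsub>G\<^esub> (S i)))"
    and "PhiAll \<equiv> piT ` (F <#>\<^bsub>G\<^esub> set_inv\<^bsub>G\<^esub> (\<Union>i\<in>{1..k}. S i))"
    and "S' \<equiv> (\<lambda>i. (piT ` (F <#>\<^bsub>G\<^esub> set_inv\<^bsub>G\<^esub> (S i)) <#>\<^bsub>G\<^esub> S i <#>\<^bsub>G\<^esub> set_inv\<^bsub>G\<^esub> F) \<inter> H)"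
  shows "(card PhiAll = card F \<longrightarrow>
            k_paradoxical (G\<lparr>carrier := H\<rparr>) k S'
          \<and> tarski_number (G\<lparr>carrier := H\<rparr>) \<le> (\<Sum>i\<in>{1..k}. card (S' i)))
       \<and> (real (card PhiAll) \<le> real k / 2 * real (card F) \<longrightarrow>
            (\<exists>S2. k_paradoxical (G\<lparr>carrier := H\<rparr>) 2 S2
                 \<and> S2 1 \<union> S2 2 = (\<Union>i\<in>{1..k}. S' i))
          \<and> tarski_number (G\<lparr>carrier := H\<rparr>) \<le> 2 * (\<Sum>i\<in>{1..k}. card (S' i)))"
proof -
  note H = assms(3) and F = assms(9-11)
  interpret group G by fact
  have k: "2 \<le> k" and S: "\<forall>i\<in>{1..k}. finite (S i) \<and> S i \<subseteq> carrier G"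
    using assms(7) unfolding k_paradoxical_def by blast+
  have S': "\<forall>i\<in>{1..k}. finite (S' i) \<and> S' i \<subseteq> H"
    using S F by (simp add: S'_def finite_set_mult finite_set_inv)
  have expand: "\<forall>B\<subseteq>H \<times> {1..k}. finite B \<longrightarrow>
      card B * card F \<le> card (\<Union>(inv_translates G S' ` B)) * card PhiAll"
    using card_mult_le_card_inv_translates_transversal[OF H assms(4,6,7) F(1,3)]
    unfolding S'_def PhiAll_def by blast
  have F_pos: "0 < card F"
    using F by (simp add: card_gt_0_iff)
  have "card PhiAll = card F \<Longrightarrow> k_paradoxical (G\<lparr>carrier := H\<rparr>) k S'"
    by (rule subgroup_k_paradoxical_if_expanding[OF H k S' F_pos _ expand])
  moreover have "real (card PhiAll) \<le> real k / 2 * real (card F) \<Longrightarrow>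
      k_paradoxical (G\<lparr>carrier := H\<rparr>) 2 (\<lambda>_. \<Union>i\<in>{1..k}. S' i)"
    by (rule subgroup_2_paradoxical_if_expanding[OF H k S' F_pos _ expand])
  ultimately show ?thesis
    using tarski_number_le_sum_card[of "G\<lparr>carrier := H\<rparr>" k S']
      tarski_number_le_sum_card[of "G\<lparr>carrier := H\<rparr>" 2 "\<lambda>_. \<Union>i\<in>{1..k}. S' i"]
      card_UN_le[of "{1..k}" S'] by auto
qed

end
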